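(* Let $m,n\geq 0$ be integers. Then \[ \sum_{k=1}^{n}\frac{(q/z;q)_{k}(z;q)_{n-k}(z;q)_m}{(q;q)_k (q;q)_{n-k}(q^k;q)_{m+1}}q^{mk}z^k -\sum_{k=1}^{m}\frac{(q/z;q)_{k}(z;q)_{m-k}(z;q)_n}{(q;q)_k (q;q)_{m-k}(q^k;q)_{n+1}}q^{nk}z^k \] \[ =\frac{(1-zq^{-1})(z;q)_m(z;q)_n}{(q;q)_{m}(q;q)_{n}}\left(\sum_{k=1}^m\frac{q^k}{(1-zq^{k-1})(1-q^k)}-\sum_{k=1}^n\frac{q^k}{(1-zq^{k-1})(1-q^k)}\right). \]
   Context: For $N\geq 0$, $(x;q)_N=(1-x)(1-xq)\cdots(1-xq^{N-1})$ (with $(x;q)_0=1$). The identity is one of rational functions in $q$ and $z$. *)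

theory Defs
  imports Main
begin

definition qpoch :: "'a::comm_ring_1 \<Rightarrow> 'a \<Rightarrow> nat \<Rightarrow> 'a" where
  "qpoch x q N = (\<Prod>j<N. (1 - x * q ^ j))"

end

theory Submission
  imports Defs
begin

text \<open>
  Write \<open>A(a,b)\<close> for the first sum of the identity with \<open>(m,n) = (a,b)\<close>. Its summand is a
  q-hypergeometric term; combining its contiguous relations in \<open>a\<close>, \<open>b\<close> and the summation index
  gives, after the sum over \<open>k\<close> telescopes, the three-term recurrence
  \<open>(1 - q^(b+1)) A(a,b+1) - (1 - q^(a+1)) A(a+1,b) - z (q^a - q^b) A(a,b)\<close> = boundary term.
  The corrected sums \<open>Y(a,b) = A(a,b) - (z;q)_a / (q;q)_a \<cdot> A(0,b)\<close> satisfy the same recurrence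
  with an inhomogeneity antisymmetric in \<open>(a,b)\<close>, and \<open>Y(0,b) = 0 = Y(b,0)\<close>; induction on \<open>a\<close>
  gives \<open>Y(a,b) = Y(b,a)\<close>. So \<open>A(m,n) - A(n,m)\<close> is expressed through \<open>A(0,n)\<close> and \<open>A(0,m)\<close>,
  and a second telescoping argument gives the closed form of \<open>A(0,b)\<close> as a q-harmonic sum.
\<close>

lemma qpoch_Suc: "qpoch x q (Suc N) = qpoch x q N * (1 - x * q ^ N)"
  by (simp add: qpoch_def)

lemma qpoch_0 [simp]: "qpoch x q 0 = 1"
  by (simp add: qpoch_def)

lemma qpoch_Suc_left: "qpoch x q (Suc N) = (1 - x) * qpoch (x * q) q N"
  unfolding qpoch_def prod.lessThan_Suc_shift by (simp add: mult_ac)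

lemma inverse_qpoch_shift:
  fixes x q :: "'a::field"
  assumes "x \<noteq> 1"
  shows "inverse (qpoch (x * q) q N) = (1 - x) * inverse (qpoch x q (Suc N))"
  using assms by (simp add: qpoch_Suc_left)

definition powers_ne_one :: "'a::field \<Rightarrow> nat \<Rightarrow> bool" where
  "powers_ne_one q N \<longleftrightarrow> (\<forall>j\<in>{1..N}. q ^ j \<noteq> 1)"

lemma powers_ne_one_mono: "powers_ne_one q N \<Longrightarrow> M \<le> N \<Longrightarrow> powers_ne_one q M"
  unfolding powers_ne_one_def by auto

lemma powers_ne_oneD: "powers_ne_one q N \<Longrightarrow> 0 < j \<Longrightarrow> j \<le> N \<Longrightarrow> q ^ j \<noteq> 1"
  unfolding powers_ne_one_def by auto

definition A_term :: "'a::field \<Rightarrow> 'a \<Rightarrow> nat \<Rightarrow> nat \<Rightarrow> nat \<Rightarrow> 'a" where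
  "A_term q z a b k = qpoch (q / z) q k * qpoch z q (b - k) * qpoch z q a
        / (qpoch q q k * qpoch q q (b - k) * qpoch (q ^ k) q (a + 1)) * q ^ (a * k) * z ^ k"

lemma A_term_Suc_upper:
  assumes "k \<le> b"
  shows "A_term q z a (Suc b) k = A_term q z a b k * (1 - z * q ^ (b - k)) / (1 - q ^ Suc (b - k))"
proof -
  have "Suc b - k = Suc (b - k)" using assms by simp
  then show ?thesis unfolding A_term_def by (simp add: qpoch_Suc mult_ac)
qed

lemma A_term_Suc_exponent:
  "A_term q z (Suc a) b k = A_term q z a b k * (1 - z * q ^ a) * q ^ k / (1 - q ^ (k + Suc a))"
  unfolding A_term_def by (simp add: qpoch_Suc power_add mult_ac)

lemma A_term_Suc_index:
  fixes q z :: "'a::field"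
  assumes "k \<le> b" and "q ^ k \<noteq> 1"
  shows "A_term q z a (Suc b) (Suc k)
    = A_term q z a b k * (1 - q ^ Suc k / z) * z * q ^ a * (1 - q ^ k) / ((1 - q ^ Suc k) * (1 - q ^ (k + Suc a)))"
  using assms(1)
  unfolding A_term_def divide_inverse inverse_mult_distrib power_Suc2[of q k] inverse_qpoch_shift[OF assms(2)]
  by (simp add: qpoch_Suc power_add mult_ac)

lemma contiguous_rational_identity:
  fixes q z x y s t :: "'a::field"
  assumes "z \<noteq> 0" "1 - x \<noteq> 0" "1 - q * x \<noteq> 0" "1 - q * y \<noteq> 0" "1 - q * x * s \<noteq> 0"
  shows "(1 - q * x * y) * (t * (1 - z * y) / (1 - q * y)) - (1 - q * s) * (t * (1 - z * s) * x / (1 - q * x * s))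
           - z * (s - x * y) * t
    = (1 - x) * (t * (1 - z * y) / (1 - q * y))
      - (1 - q * x) * (t * (1 - q * x / z) * z * s * (1 - x) / ((1 - q * x) * (1 - q * x * s)))"
proof -
  \<comment> \<open>\<open>algebra\<close> cannot use \<open>u \<noteq> 0\<close> and fails on powers with symbolic exponents, hence the
    abstraction \<open>x = q^k\<close>, \<open>y = q^(b-k)\<close>, \<open>s = q^a\<close> and the facts \<open>inverse u * u = 1\<close>.\<close>
  have "inverse z * z = 1" "inverse (1 - x) * (1 - x) = 1" "inverse (1 - q * x) * (1 - q * x) = 1"
    "inverse (1 - q * y) * (1 - q * y) = 1" "inverse (1 - q * x * s) * (1 - q * x * s) = 1"
    using assms by simp_all
  then show ?thesis unfolding divide_inverse inverse_mult_distrib by algebra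
qed

lemma A_term_contiguous:
  fixes q z :: "'a::field"
  assumes z: "z \<noteq> 0" and k: "k \<le> b"
    and nz: "q ^ k \<noteq> 1" "q ^ Suc k \<noteq> 1" "q ^ Suc (b - k) \<noteq> 1" "q ^ (k + Suc a) \<noteq> 1"
  shows "(1 - q ^ Suc b) * A_term q z a (Suc b) k - (1 - q ^ Suc a) * A_term q z (Suc a) b k
           - z * (q ^ a - q ^ b) * A_term q z a b k
       = (1 - q ^ k) * A_term q z a (Suc b) k - (1 - q ^ Suc k) * A_term q z a (Suc b) (Suc k)"
proof -
  obtain j where b: "b = k + j" using k le_iff_add by blast
  have pw: "q ^ Suc b = q * q ^ k * q ^ j" "q ^ b = q ^ k * q ^ j" "q ^ Suc k = q * q ^ k"
    "q ^ (k + Suc a) = q * q ^ k * q ^ a" "q ^ Suc a = q * q ^ a" "q ^ Suc j = q * q ^ j" "b - k = j"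
    by (simp_all add: b power_add)
  show ?thesis
    unfolding A_term_Suc_upper[OF k] A_term_Suc_exponent A_term_Suc_index[OF k nz(1)] pw
    by (rule contiguous_rational_identity) (use z nz in \<open>simp_all add: b power_add mult.assoc\<close>)
qed

lemma telescope_rational_identity:
  fixes q z x y t :: "'a::field"
  assumes "q \<noteq> 0" "z \<noteq> 0" "x \<noteq> 0" "1 - x \<noteq> 0" "1 - q * x \<noteq> 0" "1 - q * y \<noteq> 0" "1 - q * x * y \<noteq> 0"
  shows "(1 - q * x * y) * (t * (1 - z * y) / (1 - q * y)) - (1 - z * (x * y)) * t
    = - (q * x * y / (q * x) * (1 - q * x)\<^sup>2
          * (t * (1 - q * x / z) * z * (1 - x) / ((1 - q * x) * (1 - q * x))) / (1 - q * x * y))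
      - - (q * x * y / x * (1 - x)\<^sup>2 * (t * (1 - z * y) / (1 - q * y)) / (1 - q * x * y))"
proof -
  have "inverse q * q = 1" "inverse z * z = 1" "inverse x * x = 1" "inverse (1 - x) * (1 - x) = 1"
    "inverse (1 - q * x) * (1 - q * x) = 1" "inverse (1 - q * y) * (1 - q * y) = 1"
    "inverse (1 - q * x * y) * (1 - q * x * y) = 1"
    using assms by simp_all
  then show ?thesis unfolding divide_inverse inverse_mult_distrib power2_eq_square by algebra
qed

definition A_zero_telescope :: "'a::field \<Rightarrow> 'a \<Rightarrow> nat \<Rightarrow> nat \<Rightarrow> 'a" where
  "A_zero_telescope q z b k
     = - (q ^ Suc b / q ^ k * (1 - q ^ k)\<^sup>2 * A_term q z 0 (Suc b) k / (1 - q ^ Suc b))"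

lemma A_term_zero_telescopes:
  fixes q z :: "'a::field"
  assumes z: "z \<noteq> 0" and q: "q \<noteq> 0" and k: "k \<le> b"
    and nz: "q ^ k \<noteq> 1" "q ^ Suc k \<noteq> 1" "q ^ Suc (b - k) \<noteq> 1" "q ^ Suc b \<noteq> 1"
  shows "(1 - q ^ Suc b) * A_term q z 0 (Suc b) k - (1 - z * q ^ b) * A_term q z 0 b k
       = A_zero_telescope q z b (Suc k) - A_zero_telescope q z b k"
proof -
  obtain j where b: "b = k + j" using k le_iff_add by blast
  have pw: "q ^ Suc b = q * q ^ k * q ^ j" "q ^ b = q ^ k * q ^ j" "q ^ Suc k = q * q ^ k"
    "q ^ (k + Suc 0) = q * q ^ k" "q ^ Suc j = q * q ^ j" "b - k = j"
    by (simp_all add: b power_add)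
  show ?thesis
    unfolding A_zero_telescope_def A_term_Suc_upper[OF k] A_term_Suc_index[OF k nz(1)] pw power_0 mult_1_right
    by (rule telescope_rational_identity) (use q z nz in \<open>simp_all add: b power_add mult.assoc\<close>)
qed

lemma A_term_one:
  fixes q z :: "'a::field"
  assumes "z \<noteq> 0"
  shows "A_term q z a b 1
    = (z - q) * q ^ a * qpoch z q a * qpoch z q (b - 1) / ((1 - q) * qpoch q q (Suc a) * qpoch q q (b - 1))"
proof -
  have "qpoch x q 1 = 1 - x" for x :: 'a by (simp add: qpoch_def)
  moreover have "(1 - q / z) * z = z - q" using assms by (simp add: field_simps)
  ultimately show ?thesis by (simp add: A_term_def mult_ac)
qed

definition A_sum :: "'a::field \<Rightarrow> 'a \<Rightarrow> nat \<Rightarrow> nat \<Rightarrow> 'a" where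
  "A_sum q z a b = (\<Sum>k=1..b. A_term q z a b k)"

lemma A_sum_contiguous:
  fixes q z :: "'a::field"
  assumes q: "powers_ne_one q (a + b + 1)" and z: "z \<noteq> 0"
  shows "(1 - q ^ Suc b) * A_sum q z a (Suc b) - (1 - q ^ Suc a) * A_sum q z (Suc a) b
           - z * (q ^ a - q ^ b) * A_sum q z a b
       = (z - q) * q ^ a * qpoch z q a * qpoch z q b / (qpoch q q (Suc a) * qpoch q q b)"
proof -
  define g where "g k = - (1 - q ^ k) * A_term q z a (Suc b) k" for k
  have "(\<Sum>k=1..b. (1 - q ^ Suc b) * A_term q z a (Suc b) k - (1 - q ^ Suc a) * A_term q z (Suc a) b k
           - z * (q ^ a - q ^ b) * A_term q z a b k) = (\<Sum>k=1..b. g (Suc k) - g k)"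
  proof (rule sum.cong[OF refl])
    fix k assume k: "k \<in> {1..b}"
    then have "q ^ k \<noteq> 1" "q ^ Suc k \<noteq> 1" "q ^ Suc (b - k) \<noteq> 1" "q ^ (k + Suc a) \<noteq> 1"
      by (simp_all add: powers_ne_oneD[OF q] del: power_Suc)
    from A_term_contiguous[OF z _ this] k
    show "(1 - q ^ Suc b) * A_term q z a (Suc b) k - (1 - q ^ Suc a) * A_term q z (Suc a) b k
           - z * (q ^ a - q ^ b) * A_term q z a b k = g (Suc k) - g k"
      unfolding g_def by (simp add: algebra_simps)
  qed
  also have "\<dots> = g (Suc b) - g 1" by (rule sum_Suc_diff) simp
  finally have tele: "(1 - q ^ Suc b) * (A_sum q z a (Suc b) - A_term q z a (Suc b) (Suc b))
      - (1 - q ^ Suc a) * A_sum q z (Suc a) b - z * (q ^ a - q ^ b) * A_sum q z a b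
      = g (Suc b) - g 1"
    by (simp add: A_sum_def sum_subtractf sum_distrib_left)
  have "(1 - q ^ Suc b) * A_sum q z a (Suc b) - (1 - q ^ Suc a) * A_sum q z (Suc a) b
           - z * (q ^ a - q ^ b) * A_sum q z a b
      = (g (Suc b) - g 1) + (1 - q ^ Suc b) * A_term q z a (Suc b) (Suc b)"
    unfolding tele[symmetric] by (simp add: algebra_simps)
  also have "\<dots> = (1 - q) * A_term q z a (Suc b) 1"
    unfolding g_def by (simp add: algebra_simps)
  also have "\<dots> = (z - q) * q ^ a * qpoch z q a * qpoch z q b / (qpoch q q (Suc a) * qpoch q q b)"
    using A_term_one[OF z] powers_ne_oneD[OF q, of 1] by simp
  finally show ?thesis .
qed

lemma A_zero_telescope_Suc:
  fixes q z :: "'a::field"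
  assumes "q \<noteq> 0" and "q ^ Suc b \<noteq> 1"
  shows "A_zero_telescope q z b (Suc b) = - (1 - q ^ Suc b) * A_term q z 0 (Suc b) (Suc b)"
proof -
  have "1 - q ^ Suc b \<noteq> 0" using assms(2) by simp
  with assms(1) show ?thesis by (simp add: A_zero_telescope_def power2_eq_square field_simps del: power_Suc)
qed

lemma A_zero_telescope_one:
  fixes q z :: "'a::field"
  assumes "z \<noteq> 0" and "q \<noteq> 0" and "q \<noteq> 1"
  shows "A_zero_telescope q z b 1 = (q - z) * q ^ b * qpoch z q b / qpoch q q (Suc b)"
proof -
  define u where "u = q ^ b"
  have "A_term q z 0 (Suc b) 1 = (z - q) * qpoch z q b / ((1 - q) * (1 - q) * qpoch q q b)"
    using A_term_one[OF assms(1), of q 0 "Suc b"] by (simp add: qpoch_Suc)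
  moreover have "inverse (1 - q) * (1 - q) = 1" "inverse q * q = 1" using assms(2,3) by simp_all
  ultimately show ?thesis
    unfolding A_zero_telescope_def qpoch_Suc power_Suc power_one_right u_def[symmetric]
      power2_eq_square divide_inverse inverse_mult_distrib
    by algebra
qed

lemma A_sum_zero_Suc:
  fixes q z :: "'a::field"
  assumes q: "powers_ne_one q (Suc b)" and "q \<noteq> 0" and z: "z \<noteq> 0"
  shows "(1 - q ^ Suc b) * A_sum q z 0 (Suc b)
    = (1 - z * q ^ b) * A_sum q z 0 b - (q - z) * q ^ b * qpoch z q b / qpoch q q (Suc b)"
proof -
  let ?h = "A_zero_telescope q z b"
  have "(\<Sum>k=1..b. (1 - q ^ Suc b) * A_term q z 0 (Suc b) k - (1 - z * q ^ b) * A_term q z 0 b k)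
      = (\<Sum>k=1..b. ?h (Suc k) - ?h k)"
  proof (rule sum.cong[OF refl])
    fix k assume k: "k \<in> {1..b}"
    then have "q ^ k \<noteq> 1" "q ^ Suc k \<noteq> 1" "q ^ Suc (b - k) \<noteq> 1" "q ^ Suc b \<noteq> 1"
      by (simp_all add: powers_ne_oneD[OF q] del: power_Suc)
    with k show "(1 - q ^ Suc b) * A_term q z 0 (Suc b) k - (1 - z * q ^ b) * A_term q z 0 b k
        = ?h (Suc k) - ?h k"
      using A_term_zero_telescopes[OF z \<open>q \<noteq> 0\<close>] by simp
  qed
  also have "\<dots> = ?h (Suc b) - ?h 1" by (rule sum_Suc_diff) simp
  finally have tele: "(1 - q ^ Suc b) * (A_sum q z 0 (Suc b) - A_term q z 0 (Suc b) (Suc b))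
      - (1 - z * q ^ b) * A_sum q z 0 b = ?h (Suc b) - ?h 1"
    by (simp add: A_sum_def sum_subtractf sum_distrib_left)
  have "q ^ Suc b \<noteq> 1" "q \<noteq> 1"
    using powers_ne_oneD[OF q, of "Suc b"] powers_ne_oneD[OF q, of 1] by simp_all
  have "(1 - q ^ Suc b) * A_sum q z 0 (Suc b)
      = (1 - z * q ^ b) * A_sum q z 0 b + (?h (Suc b) - ?h 1) + (1 - q ^ Suc b) * A_term q z 0 (Suc b) (Suc b)"
    unfolding tele[symmetric] by (simp add: algebra_simps)
  also have "\<dots> = (1 - z * q ^ b) * A_sum q z 0 b - ?h 1"
    using A_zero_telescope_Suc[OF \<open>q \<noteq> 0\<close> \<open>q ^ Suc b \<noteq> 1\<close>] by (simp add: algebra_simps)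
  finally show ?thesis
    using A_zero_telescope_one[OF z \<open>q \<noteq> 0\<close> \<open>q \<noteq> 1\<close>, of b] by simp
qed

lemma A_sum_zero_closed_form:
  fixes q z :: "'a::field"
  assumes "powers_ne_one q b" and "q \<noteq> 0" and "z \<noteq> 0"
    and "\<And>k. 1 \<le> k \<Longrightarrow> k \<le> b \<Longrightarrow> z * q ^ (k - 1) \<noteq> 1"
  shows "A_sum q z 0 b = - ((1 - z / q) * qpoch z q b / qpoch q q b
                              * (\<Sum>k=1..b. q ^ k / ((1 - z * q ^ (k - 1)) * (1 - q ^ k))))"
  using assms(1,4)
proof (induction b)
  case 0
  then show ?case by (simp add: A_sum_def)
next
  case (Suc b)
  define u where "u = q ^ b"
  define H where "H = (\<Sum>k=1..b. q ^ k / ((1 - z * q ^ (k - 1)) * (1 - q ^ k)))"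
  have IH: "A_sum q z 0 b = - ((1 - z / q) * qpoch z q b / qpoch q q b * H)"
    using Suc powers_ne_one_mono[OF Suc.prems(1)] unfolding H_def by simp
  have "q * u \<noteq> 1" "z * u \<noteq> 1"
    using powers_ne_oneD[OF Suc.prems(1), of "Suc b"] Suc.prems(2)[of "Suc b"] unfolding u_def by simp_all
  then have "inverse (1 - q * u) * (1 - q * u) = 1" "inverse (1 - z * u) * (1 - z * u) = 1"
    "inverse q * q = 1"
    using \<open>q \<noteq> 0\<close> by simp_all
  moreover have "(1 - q * u) * A_sum q z 0 (Suc b)
      = (1 - z * u) * A_sum q z 0 b - (q - z) * u * qpoch z q b / (qpoch q q b * (1 - q * u))"
    using A_sum_zero_Suc[OF Suc.prems(1) \<open>q \<noteq> 0\<close> \<open>z \<noteq> 0\<close>] unfolding u_def by (simp add: qpoch_Suc)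
  moreover have "(\<Sum>k=1..Suc b. q ^ k / ((1 - z * q ^ (k - 1)) * (1 - q ^ k)))
      = H + q * u / ((1 - z * u) * (1 - q * u))"
    by (simp add: H_def u_def)
  ultimately show ?case
    using IH unfolding qpoch_Suc u_def[symmetric] divide_inverse inverse_mult_distrib by algebra
qed

definition Y_sum :: "'a::field \<Rightarrow> 'a \<Rightarrow> nat \<Rightarrow> nat \<Rightarrow> 'a" where
  "Y_sum q z a b = A_sum q z a b - qpoch z q a / qpoch q q a * A_sum q z 0 b"

definition E_inhom :: "'a::field \<Rightarrow> 'a \<Rightarrow> nat \<Rightarrow> nat \<Rightarrow> 'a" where
  "E_inhom q z a b = (q - z) * qpoch z q a * qpoch z q b
     * (q ^ b / (qpoch q q a * qpoch q q (Suc b)) - q ^ a / (qpoch q q (Suc a) * qpoch q q b))"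

lemma E_inhom_antisym: "E_inhom q z b a = - E_inhom q z a b"
  unfolding E_inhom_def by (simp add: algebra_simps)

lemma Y_sum_contiguous:
  fixes q z :: "'a::field"
  assumes q: "powers_ne_one q (a + b + 1)" and "q \<noteq> 0" and "z \<noteq> 0"
  shows "(1 - q ^ Suc b) * Y_sum q z a (Suc b) - (1 - q ^ Suc a) * Y_sum q z (Suc a) b
           - z * (q ^ a - q ^ b) * Y_sum q z a b = E_inhom q z a b"
proof -
  define c where "c a = qpoch z q a / qpoch q q a" for a
  have q0: "powers_ne_one q (Suc b)" using powers_ne_one_mono[OF q] by simp
  have "q ^ Suc a \<noteq> 1" using powers_ne_oneD[OF q, of "Suc a"] by simp
  then have c: "(1 - q ^ Suc a) * c (Suc a) = (1 - z * q ^ a) * c a"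
    unfolding c_def by (simp add: qpoch_Suc)
  have "(1 - q ^ Suc b) * Y_sum q z a (Suc b) - (1 - q ^ Suc a) * Y_sum q z (Suc a) b
           - z * (q ^ a - q ^ b) * Y_sum q z a b
      = ((1 - q ^ Suc b) * A_sum q z a (Suc b) - (1 - q ^ Suc a) * A_sum q z (Suc a) b
           - z * (q ^ a - q ^ b) * A_sum q z a b)
        - c a * ((1 - q ^ Suc b) * A_sum q z 0 (Suc b) - (1 - z * q ^ b) * A_sum q z 0 b)
        + ((1 - q ^ Suc a) * c (Suc a) - (1 - z * q ^ a) * c a) * A_sum q z 0 b"
    unfolding Y_sum_def c_def[symmetric] by (simp add: algebra_simps)
  also have "\<dots> = (z - q) * q ^ a * qpoch z q a * qpoch z q b / (qpoch q q (Suc a) * qpoch q q b)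
        + c a * ((q - z) * q ^ b * qpoch z q b / qpoch q q (Suc b))"
    unfolding c A_sum_contiguous[OF assms(1,3)]
      A_sum_zero_Suc[OF q0 assms(2,3)] by simp
  also have "\<dots> = E_inhom q z a b"
    unfolding E_inhom_def c_def by (simp add: divide_inverse algebra_simps)
  finally show ?thesis .
qed

lemma Y_sum_sym:
  fixes q z :: "'a::field"
  assumes q: "powers_ne_one q (a + b)" and "q \<noteq> 0" and "z \<noteq> 0"
  shows "Y_sum q z a b = Y_sum q z b a"
  using q
proof (induction a arbitrary: b)
  case 0
  then show ?case by (simp add: Y_sum_def A_sum_def)
next
  case (Suc a)
  have q1: "powers_ne_one q (a + b + 1)" and q2: "powers_ne_one q (b + a + 1)"
    using Suc.prems by (simp_all add: add.commute)
  have IH: "Y_sum q z a (Suc b) = Y_sum q z (Suc b) a" "Y_sum q z a b = Y_sum q z b a"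
    using Suc.IH powers_ne_one_mono[OF Suc.prems] by simp_all
  have "(1 - q ^ Suc a) * (Y_sum q z b (Suc a) - Y_sum q z (Suc a) b)
      = ((1 - q ^ Suc b) * Y_sum q z a (Suc b) - (1 - q ^ Suc a) * Y_sum q z (Suc a) b
           - z * (q ^ a - q ^ b) * Y_sum q z a b)
      + ((1 - q ^ Suc a) * Y_sum q z b (Suc a) - (1 - q ^ Suc b) * Y_sum q z (Suc b) a
           - z * (q ^ b - q ^ a) * Y_sum q z b a)"
    unfolding IH by (simp add: algebra_simps)
  also have "\<dots> = E_inhom q z a b + E_inhom q z b a"
    by (simp only: Y_sum_contiguous[OF q1 assms(2,3)] Y_sum_contiguous[OF q2 assms(2,3)])
  finally have "(1 - q ^ Suc a) * (Y_sum q z b (Suc a) - Y_sum q z (Suc a) b) = 0"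
    using E_inhom_antisym[of q z a b] by simp
  moreover have "q ^ Suc a \<noteq> 1" using powers_ne_oneD[OF q1, of "Suc a"] by simp
  ultimately show ?case by simp
qed

theorem corollary6p2:
  fixes q z :: "'a::field" and m n :: nat
  assumes hq0: "q \<noteq> 0" and hz0: "z \<noteq> 0"
    and hq: "\<And>j. 1 \<le> j \<Longrightarrow> j \<le> m + n \<Longrightarrow> q ^ j \<noteq> 1"
    and hz: "\<And>k. 1 \<le> k \<Longrightarrow> k \<le> max m n \<Longrightarrow> z * q ^ (k - 1) \<noteq> 1"
  shows
   "(\<Sum>k=1..n. qpoch (q / z) q k * qpoch z q (n - k) * qpoch z q m
        / (qpoch q q k * qpoch q q (n - k) * qpoch (q ^ k) q (m + 1)) * q ^ (m * k) * z ^ k)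
  - (\<Sum>k=1..m. qpoch (q / z) q k * qpoch z q (m - k) * qpoch z q n
        / (qpoch q q k * qpoch q q (m - k) * qpoch (q ^ k) q (n + 1)) * q ^ (n * k) * z ^ k)
  = (1 - z / q) * qpoch z q m * qpoch z q n / (qpoch q q m * qpoch q q n)
    * ((\<Sum>k=1..m. q ^ k / ((1 - z * q ^ (k - 1)) * (1 - q ^ k)))
     - (\<Sum>k=1..n. q ^ k / ((1 - z * q ^ (k - 1)) * (1 - q ^ k))))"
proof -
  have q: "powers_ne_one q (m + n)" using hq by (auto simp: powers_ne_one_def)
  define Hm where "Hm = (\<Sum>k=1..m. q ^ k / ((1 - z * q ^ (k - 1)) * (1 - q ^ k)))"
  define Hn where "Hn = (\<Sum>k=1..n. q ^ k / ((1 - z * q ^ (k - 1)) * (1 - q ^ k)))"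
  have Am: "A_sum q z 0 m = - ((1 - z / q) * qpoch z q m / qpoch q q m * Hm)"
    unfolding Hm_def by (rule A_sum_zero_closed_form) (use powers_ne_one_mono[OF q] hq0 hz0 hz in auto)
  have An: "A_sum q z 0 n = - ((1 - z / q) * qpoch z q n / qpoch q q n * Hn)"
    unfolding Hn_def by (rule A_sum_zero_closed_form) (use powers_ne_one_mono[OF q] hq0 hz0 hz in auto)
  have "A_sum q z m n - A_sum q z n m
      = qpoch z q m / qpoch q q m * A_sum q z 0 n - qpoch z q n / qpoch q q n * A_sum q z 0 m"
    using Y_sum_sym[OF q hq0 hz0] unfolding Y_sum_def by (simp add: algebra_simps)
  also have "\<dots> = (1 - z / q) * qpoch z q m * qpoch z q n / (qpoch q q m * qpoch q q n) * (Hm - Hn)"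
    unfolding Am An by (simp add: divide_inverse algebra_simps)
  finally show ?thesis unfolding A_sum_def A_term_def Hm_def Hn_def .
qed

end
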